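(* Let $a, b$ be positive integers with $b>1$ and let $i \ge 3$ be an integer with $\gcd(r_b(i),a) = \gcd(r_b(i-1),a) = 1$. Then $\omega \in \operatorname{Ap}(S_a(b,i))$ if and only if either $\omega = b\, a^{(i)}_i$, or there exist $\omega' \in \operatorname{Ap}(S_a(b,i-1))$ and $u_i \in \{0,\ldots,b-1\}$ such that \[\omega = \omega' + b^{i-1}\, \mathsf{m}_{S_a(b,i-1)}(\omega') + u_i\, a^{(i)}_i.\]
   Context: For $\ell \ge 1$, $r_b(\ell) = \sum_{j=0}^{\ell-1} b^j$, and $r_b(0)=0$. For integers $m\ge 2$ and $j\ge 1$, $a^{(m)}_j := r_b(m) + a\, r_b(j-1)$, and $S_a(b,m)$ is the submonoid of $\mathbb{N}$ generated by $\{a^{(m)}_j : j\ge 1\}$; when $\gcd(r_b(m),a)=1$ it is a numerical semigroup minimally generated by $a^{(m)}_1,\ldots,a^{(m)}_m$. $\operatorname{Ap}(S) = \{\omega\in S : \omega - \operatorname{m}(S) \notin S\}$ with $\operatorname{m}(S)$ the smallest nonzero element. For $\omega' \in \operatorname{Ap}(S_a(b,m))$, $\mathsf{m}_{S_a(b,m)}(\omega')$ denotes the (unique) length of $\omega'$, i.e. the unique value of $\sum_j u_j$ over all expressions $\omega' = \sum_{j=1}^m u_j a^{(m)}_j$ with $u_j\in\mathbb{N}$ (such length is unique for elements of this Apéry set). *)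

theory Defs
  imports Main
begin

definition rep :: "nat \<Rightarrow> nat \<Rightarrow> nat" where
  "rep b l = (\<Sum>j<l. b ^ j)"

definition gen :: "nat \<Rightarrow> nat \<Rightarrow> nat \<Rightarrow> nat \<Rightarrow> nat" where
  "gen a b m j = rep b m + a * rep b (j - 1)"

inductive_set submonoid_gen :: "nat set \<Rightarrow> nat set" for G where
  zero: "0 \<in> submonoid_gen G"
| step: "x \<in> submonoid_gen G \<Longrightarrow> g \<in> G \<Longrightarrow> x + g \<in> submonoid_gen G"

definition Sab :: "nat \<Rightarrow> nat \<Rightarrow> nat \<Rightarrow> nat set" where
  "Sab a b m = submonoid_gen {gen a b m j | j. j \<ge> 1}"

definition multiplicity_ns :: "nat set \<Rightarrow> nat" where
  "multiplicity_ns S = (LEAST x. x \<in> S \<and> x \<noteq> 0)"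

definition Apery :: "nat set \<Rightarrow> nat set" where
  "Apery S = {w \<in> S. int w - int (multiplicity_ns S) \<notin> int ` S}"

(* length of an element w.r.t. the generators a^{(m)}_1..a^{(m)}_m
   (the unique value of sum u_j over expressions w = sum u_j a^{(m)}_j) *)
definition len_S :: "nat \<Rightarrow> nat \<Rightarrow> nat \<Rightarrow> nat \<Rightarrow> nat" where
  "len_S a b m w = (THE l. \<exists>u :: nat \<Rightarrow> nat.
      w = (\<Sum>j=1..m. u j * gen a b m j) \<and> l = (\<Sum>j=1..m. u j))"

end

theory Submission
  imports Defs
begin

text \<open>
  Write R = r_b(m). Since a^(m)_j = R + a r_b(j - 1), an element of S_a(b,m) using u_j copies
  of a^(m)_j equals L R + a n, where L = sum u_j and n is a sum of L repunits r_b(t), t < m.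
  The fewest repunits summing to n are found greedily, so S_a(b,m) consists of the L R + a n
  with L at least the greedy count of n. When gcd(R, a) = 1 this representation is unique up to
  trading R copies of a for a copies of R, which makes the Apery set (with respect to the
  multiplicity R) equal to {greedy n * R + a n | n < R}, and greedy n is the length of that
  element. Finally r_b(i) = b r_b(i - 1) + 1, so n < r_b(i) is either b r_b(i - 1) or
  u r_b(i - 1) + n' with u < b and n' < r_b(i - 1), and then the greedy count at level i is
  u plus the greedy count of n' at level i - 1; this is the stated recursion.
\<close>

lemma rep_0 [simp]: "rep b 0 = 0"
  by (simp add: rep_def)

lemma rep_Suc: "rep b (Suc k) = rep b k + b ^ k"
  by (simp add: rep_def)

lemma rep_Suc_mult: "rep b (Suc k) = b * rep b k + 1"
  unfolding rep_def sum.lessThan_Suc_shift by (simp add: sum_distrib_left)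

lemma rep_pos_iff [simp]: "0 < rep b k \<longleftrightarrow> 0 < k"
  by (cases k) (simp_all add: rep_Suc_mult)

lemma rep_add: "rep b (m + p) = rep b p + b ^ p * rep b m"
  by (induction m) (simp_all add: rep_Suc algebra_simps power_add)

lemma less_rep_Suc_iff:
  assumes "b > 0" and "k > 0"
  shows "n < rep b (Suc k) \<longleftrightarrow>
    n = b * rep b k \<or> (\<exists>u \<in> {0..b - 1}. \<exists>n' < rep b k. n = u * rep b k + n')"
proof
  assume n: "n < rep b (Suc k)"
  show "n = b * rep b k \<or> (\<exists>u \<in> {0..b - 1}. \<exists>n' < rep b k. n = u * rep b k + n')"
  proof (cases "n = b * rep b k")
    case False
    then have "n < b * rep b k" using n by (simp add: rep_Suc_mult)
    then have "n div rep b k \<le> b - 1" using less_mult_imp_div_less[of n b "rep b k"] by simp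
    moreover have "n = n div rep b k * rep b k + n mod rep b k" by (metis div_mult_mod_eq)
    ultimately show ?thesis using assms(2) by fastforce
  qed simp
next
  assume "n = b * rep b k \<or> (\<exists>u \<in> {0..b - 1}. \<exists>n' < rep b k. n = u * rep b k + n')"
  then show "n < rep b (Suc k)"
  proof
    assume "\<exists>u \<in> {0..b - 1}. \<exists>n' < rep b k. n = u * rep b k + n'"
    then obtain u n' where "u \<le> b - 1" "n' < rep b k" "n = u * rep b k + n'"
      by auto
    moreover have "u + 1 \<le> b" using \<open>u \<le> b - 1\<close> assms(1) by simp
    ultimately have "n < (u + 1) * rep b k" by simp
    also have "\<dots> \<le> b * rep b k" using \<open>u + 1 \<le> b\<close> by (rule mult_le_mono1)
    finally show ?thesis by (simp add: rep_Suc_mult)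
  qed (simp add: rep_Suc_mult)
qed

lemma mem_Apery_iff:
  "w \<in> Apery S \<longleftrightarrow> w \<in> S \<and> (\<nexists>x. x \<in> S \<and> w = x + multiplicity_ns S)"
  unfolding Apery_def by (force simp: algebra_simps)

lemma coprime_linear_combination_eq:
  fixes R a L N K n :: nat
  assumes "coprime R a" and "n < R" and "L * R + a * N = K * R + a * n"
  shows "\<exists>s. N = n + s * R \<and> K = L + a * s"
proof -
  have "int a * (int N - int n) = int R * (int K - int L)"
    using arg_cong[OF assms(3), of int] by (simp add: algebra_simps)
  then have "int R dvd int a * (int N - int n)" by simp
  then have "int R dvd int N - int n"
    using assms(1) by (simp add: coprime_dvd_mult_right_iff)
  then have "int (N mod R) = int (n mod R)"
    by (simp add: mod_eq_dvd_iff zmod_int)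
  then have "N mod R = n"
    using assms(2) by simp
  define s where "s = N div R"
  have N: "N = n + s * R" using \<open>N mod R = n\<close> by (metis s_def mod_div_mult_eq)
  then have "K * R = (L + a * s) * R"
    using assms(3) by (simp add: algebra_simps)
  then have "K = L + a * s" using assms(2) by simp
  then show ?thesis using N by blast
qed

lemma submonoid_gen_add:
  assumes "x \<in> submonoid_gen G" and "y \<in> submonoid_gen G"
  shows "x + y \<in> submonoid_gen G"
  using assms(2)
proof (induction y rule: submonoid_gen.induct)
  case (step y g)
  then show ?case using submonoid_gen.step[of "x + y" G g] by (simp add: add.assoc)
qed (simp add: assms(1))

lemma submonoid_gen_mult:
  assumes "g \<in> G"
  shows "k * g \<in> submonoid_gen G"
proof (induction k)
  case (Suc k)
  then show ?case using submonoid_gen.step[of "k * g" G g] assms by (simp add: add.commute)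
qed (simp add: submonoid_gen.zero)

lemma submonoid_gen_sum:
  "finite I \<Longrightarrow> (\<And>j. j \<in> I \<Longrightarrow> f j \<in> submonoid_gen G) \<Longrightarrow> sum f I \<in> submonoid_gen G"
  by (induction I rule: finite_induct) (auto intro: submonoid_gen.zero submonoid_gen_add)

text \<open>
  The number of summands when n is written greedily as a sum of repunits rep b t, t < k;
  it is the least possible (greedy_len_le_sum, greedy_len_attained). For k < 2 only
  n = 0 is such a sum and the value is junk.
\<close>

primrec greedy_len :: "nat \<Rightarrow> nat \<Rightarrow> nat \<Rightarrow> nat" where
  "greedy_len b 0 n = 0"
| "greedy_len b (Suc k) n = n div rep b k + greedy_len b k (n mod rep b k)"

lemma greedy_len_0 [simp]: "greedy_len b k 0 = 0"
  by (induction k) simp_all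

lemma greedy_len_Suc_mult_add:
  assumes "n < rep b k"
  shows "greedy_len b (Suc k) (u * rep b k + n) = u + greedy_len b k n"
  using assms by simp

lemma greedy_len_Suc_add_mult:
  assumes "k > 0"
  shows "greedy_len b (Suc k) (n + u * rep b k) = greedy_len b (Suc k) n + u"
  using assms by simp

lemma greedy_len_rep_minus_1: "greedy_len b k (rep b k - 1) \<le> b"
  by (cases k) (simp_all add: rep_Suc_mult)

lemma greedy_len_le_Suc: "greedy_len b k n \<le> greedy_len b k (Suc n) + (b - 1)"
proof (induction k arbitrary: n)
  case (Suc k)
  show ?case
  proof (cases "Suc (n mod rep b k) = rep b k")
    case True
    then have "n mod rep b k = rep b k - 1" by simp
    then show ?thesis using True greedy_len_rep_minus_1[of b k] by (simp add: div_Suc mod_Suc)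
  next
    case False
    then show ?thesis using Suc.IH[of "n mod rep b k"] by (simp add: div_Suc mod_Suc)
  qed
qed simp

lemma greedy_len_add_rep:
  assumes "b > 0" and "k \<ge> 2"
  shows "greedy_len b k n + 1 \<le> greedy_len b k (n + rep b k)"
proof -
  obtain k' where k: "k = Suc k'" and "k' > 0" using assms(2) by (cases k) auto
  have "n + rep b k = Suc n + b * rep b k'" by (simp add: k rep_Suc_mult)
  then have "greedy_len b k (n + rep b k) = greedy_len b k (Suc n) + b"
    by (metis k greedy_len_Suc_add_mult[OF \<open>k' > 0\<close>])
  then show ?thesis using greedy_len_le_Suc[of b k n] assms(1) by simp
qed

lemma greedy_len_add_mult_rep:
  assumes "b > 0" and "k \<ge> 2"
  shows "greedy_len b k n + s \<le> greedy_len b k (n + s * rep b k)"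
proof (induction s)
  case (Suc s)
  then show ?case
    using greedy_len_add_rep[OF assms, of "n + s * rep b k"] by (simp add: add_ac)
qed simp

lemma greedy_len_Suc_le:
  assumes "b > 0" and "k \<ge> 2"
  shows "greedy_len b (Suc k) n \<le> greedy_len b k n"
  using greedy_len_add_mult_rep[OF assms, of "n mod rep b k" "n div rep b k"] by (simp add: mod_div_mult_eq)

lemma greedy_len_le_sum:
  assumes "b > 0"
  shows "greedy_len b k (\<Sum>t<k. c t * rep b t) \<le> (\<Sum>t<k. c t)"
proof (induction k)
  case (Suc k)
  consider "k = 0" | "k = 1" | "k \<ge> 2" by linarith
  then show ?case
  proof cases
    case 3
    let ?n = "\<Sum>t<k. c t * rep b t"
    have "greedy_len b (Suc k) (?n + c k * rep b k) = greedy_len b (Suc k) ?n + c k"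
      using 3 by (simp only: greedy_len_Suc_add_mult)
    also have "\<dots> \<le> greedy_len b k ?n + c k"
      using greedy_len_Suc_le[OF assms 3] by simp
    finally show ?thesis using Suc.IH by simp
  qed (simp_all add: numeral_2_eq_2)
qed simp

lemma greedy_len_attained:
  assumes "k \<ge> 2"
  shows "\<exists>c. (\<Sum>t<k. c t * rep b t) = n \<and> (\<Sum>t<k. c t) = greedy_len b k n"
  using assms
proof (induction k arbitrary: n rule: nat_induct_at_least)
  case base
  show ?case
    by (rule exI[of _ "\<lambda>t. if t = 1 then n else 0"]) (simp add: numeral_2_eq_2 rep_Suc)
next
  case (Suc k)
  obtain c where c: "(\<Sum>t<k. c t * rep b t) = n mod rep b k"
    "(\<Sum>t<k. c t) = greedy_len b k (n mod rep b k)"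
    using Suc.IH by blast
  show ?case
    by (rule exI[of _ "c(k := n div rep b k)"]) (simp add: c mod_div_mult_eq)
qed

lemma greedy_len_add_le:
  assumes "b > 0" and "k \<ge> 2"
  shows "greedy_len b k (n + n') \<le> greedy_len b k n + greedy_len b k n'"
proof -
  obtain c where c: "(\<Sum>t<k. c t * rep b t) = n" "(\<Sum>t<k. c t) = greedy_len b k n"
    using greedy_len_attained[OF assms(2)] by blast
  obtain c' where c': "(\<Sum>t<k. c' t * rep b t) = n'" "(\<Sum>t<k. c' t) = greedy_len b k n'"
    using greedy_len_attained[OF assms(2)] by blast
  show ?thesis
    using greedy_len_le_sum[OF assms(1), of k "\<lambda>t. c t + c' t"]
    by (simp add: c c' algebra_simps sum.distrib flip: c(1) c'(1))
qed

lemma greedy_len_eq_0_iff: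
  assumes "k \<ge> 2"
  shows "greedy_len b k n = 0 \<longleftrightarrow> n = 0"
proof
  assume "greedy_len b k n = 0"
  moreover obtain c where "(\<Sum>t<k. c t * rep b t) = n" "(\<Sum>t<k. c t) = greedy_len b k n"
    using greedy_len_attained[OF assms] by blast
  ultimately show "n = 0" by simp
qed simp

lemma sum_gen_eq:
  "(\<Sum>j=1..m. u j * gen a b m j)
     = (\<Sum>j=1..m. u j) * rep b m + a * (\<Sum>t<m. u (Suc t) * rep b t)"
  by (simp add: gen_def sum.atLeast1_atMost_eq sum_distrib_left sum_distrib_right
      algebra_simps sum.distrib)

definition Sab_greedy :: "nat \<Rightarrow> nat \<Rightarrow> nat \<Rightarrow> nat set" where
  "Sab_greedy a b m = {L * rep b m + a * n | L n. greedy_len b m n \<le> L}"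

lemma Sab_greedy_sum_gen:
  assumes "m \<ge> 2" and "greedy_len b m n \<le> L"
  obtains u where "L * rep b m + a * n = (\<Sum>j=1..m. u j * gen a b m j)"
    and "(\<Sum>j=1..m. u j) = L"
proof -
  obtain c where c: "(\<Sum>t<m. c t * rep b t) = n" "(\<Sum>t<m. c t) = greedy_len b m n"
    using greedy_len_attained[OF assms(1)] by blast
  define u where "u j = c (j - 1) + (if j = 1 then L - greedy_len b m n else 0)" for j
  have "0 \<in> {..<m}" using assms(1) by simp
  then have "(\<Sum>j=1..m. u j) = L" and "(\<Sum>t<m. u (Suc t) * rep b t) = n"
    using c assms(2) by (simp_all add: u_def sum.distrib algebra_simps sum.atLeast1_atMost_eq)
  then show thesis
    using that[of u] unfolding sum_gen_eq by simp
qed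

lemma Sab_greedy_add:
  assumes "b > 0" and "m \<ge> 2"
    and "x \<in> Sab_greedy a b m" and "y \<in> Sab_greedy a b m"
  shows "x + y \<in> Sab_greedy a b m"
proof -
  obtain L n where x: "x = L * rep b m + a * n" "greedy_len b m n \<le> L"
    using assms(3) by (auto simp: Sab_greedy_def)
  obtain L' n' where y: "y = L' * rep b m + a * n'" "greedy_len b m n' \<le> L'"
    using assms(4) by (auto simp: Sab_greedy_def)
  have "x + y = (L + L') * rep b m + a * (n + n')"
    using x y by (simp add: algebra_simps)
  moreover have "greedy_len b m (n + n') \<le> L + L'"
    using greedy_len_add_le[OF assms(1,2), of n n'] x y by simp
  ultimately show ?thesis by (auto simp: Sab_greedy_def)
qed

lemma gen_in_Sab_greedy:
  assumes "b > 0" and "m \<ge> 2"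
  shows "gen a b m (Suc p) \<in> Sab_greedy a b m"
  unfolding gen_def diff_Suc_1
proof (induction p rule: less_induct)
  case (less p)
  show ?case
  proof (cases "p < m")
    case True
    have "greedy_len b m (rep b p) \<le> 1"
      using greedy_len_le_sum[OF assms(1), of m "\<lambda>t. of_bool (t = p)"] True by simp
    then show ?thesis by (force simp: Sab_greedy_def)
  next
    case False
    then obtain p' where p: "p = m + p'" by (metis le_add_diff_inverse not_less)
    from less[of p', unfolded gen_def diff_Suc_1] p assms(2) obtain L n where
      Ln: "rep b m + a * rep b p' = L * rep b m + a * n" "greedy_len b m n \<le> L"
      by (auto simp: Sab_greedy_def)
    have "rep b m + a * rep b p = (L + a * b ^ p') * rep b m + a * n"
      using Ln(1) by (simp add: p rep_add algebra_simps)
    then show ?thesis using Ln(2) by (force simp: Sab_greedy_def)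
  qed
qed

lemma Sab_eq_Sab_greedy:
  assumes "b > 0" and "m \<ge> 2"
  shows "Sab a b m = Sab_greedy a b m"
proof
  show "Sab a b m \<subseteq> Sab_greedy a b m"
  proof
    fix w assume "w \<in> Sab a b m"
    then show "w \<in> Sab_greedy a b m"
      unfolding Sab_def
    proof (induction w rule: submonoid_gen.induct)
      case zero
      show ?case by (force simp: Sab_greedy_def)
    next
      case (step x g)
      then obtain j where "j \<ge> 1" and "g = gen a b m j" by blast
      then have "g = gen a b m (Suc (j - 1))" by simp
      then show ?case using Sab_greedy_add[OF assms step.IH] gen_in_Sab_greedy[OF assms] by simp
    qed
  qed
next
  show "Sab_greedy a b m \<subseteq> Sab a b m"
  proof
    fix w assume "w \<in> Sab_greedy a b m"
    then obtain L n where "w = L * rep b m + a * n" "greedy_len b m n \<le> L"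
      by (auto simp: Sab_greedy_def)
    then obtain u where "w = (\<Sum>j=1..m. u j * gen a b m j)"
      using Sab_greedy_sum_gen[OF assms(2)] by metis
    then show "w \<in> Sab a b m"
      unfolding Sab_def by (auto intro!: submonoid_gen_sum submonoid_gen_mult)
  qed
qed

lemma multiplicity_ns_Sab:
  assumes "b > 0" and "m \<ge> 2"
  shows "multiplicity_ns (Sab a b m) = rep b m"
  unfolding multiplicity_ns_def Sab_eq_Sab_greedy[OF assms]
proof (rule Least_equality)
  have "rep b m = 1 * rep b m + a * 0" and "greedy_len b m 0 \<le> 1" by simp_all
  then have "rep b m \<in> Sab_greedy a b m" unfolding Sab_greedy_def by blast
  then show "rep b m \<in> Sab_greedy a b m \<and> rep b m \<noteq> 0" using assms(2) by simp
next
  fix y assume "y \<in> Sab_greedy a b m \<and> y \<noteq> 0"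
  then obtain L n where y: "y = L * rep b m + a * n" "greedy_len b m n \<le> L" "y \<noteq> 0"
    by (auto simp: Sab_greedy_def)
  have "L \<noteq> 0"
  proof
    assume "L = 0"
    then have "n = 0" using y(2) greedy_len_eq_0_iff[OF assms(2)] by simp
    then show False using y \<open>L = 0\<close> by simp
  qed
  then show "rep b m \<le> y" using y(1) by (cases L) auto
qed

lemma Sab_greedy_minimal_form:
  assumes "b > 0" and "m \<ge> 2" and "w \<in> Sab_greedy a b m"
    and "\<nexists>x. x \<in> Sab_greedy a b m \<and> w = x + rep b m"
  shows "\<exists>n < rep b m. w = greedy_len b m n * rep b m + a * n"
proof -
  define R where "R = rep b m"
  obtain L N where w: "w = L * R + a * N" and GN: "greedy_len b m N \<le> L"
    using assms(3) by (auto simp: Sab_greedy_def R_def)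
  define n where "n = N mod R"
  define s where "s = N div R"
  have "n < R" using assms(2) by (simp add: n_def R_def)
  have N: "N = n + s * R" by (simp add: n_def s_def mod_div_mult_eq)
  have "greedy_len b m n + s \<le> greedy_len b m N"
    using greedy_len_add_mult_rep[OF assms(1,2), of n s] by (simp add: N R_def)
  then have Gn: "greedy_len b m n + s \<le> L" using GN by simp
  have w': "w = (L + a * s) * R + a * n"
    using w by (simp add: N algebra_simps)
  have "greedy_len b m n = L + a * s"
  proof (rule ccontr)
    assume "greedy_len b m n \<noteq> L + a * s"
    then have less: "greedy_len b m n < L + a * s" using Gn by simp
    then have "(L + a * s - 1) * R + a * n \<in> Sab_greedy a b m"
      unfolding Sab_greedy_def R_def by force
    moreover have "w = (L + a * s - 1) * R + a * n + R"
      using w' less by (cases "L + a * s") (simp_all add: algebra_simps)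
    ultimately show False using assms(4) by (auto simp: R_def)
  qed
  then show ?thesis using w' \<open>n < R\<close> by (auto simp: R_def)
qed

lemma greedy_form_unique:
  assumes "b > 0" and "m \<ge> 2" and "coprime (rep b m) a" and "n < rep b m"
    and "L * rep b m + a * N = greedy_len b m n * rep b m + a * n"
    and "greedy_len b m N \<le> L"
  shows "L = greedy_len b m n \<and> N = n"
proof -
  obtain s where N: "N = n + s * rep b m" and "greedy_len b m n = L + a * s"
    using coprime_linear_combination_eq[OF assms(3-5)] by blast
  moreover have "greedy_len b m n + s \<le> greedy_len b m N"
    unfolding N by (rule greedy_len_add_mult_rep[OF assms(1,2)])
  ultimately show ?thesis using assms(6) by simp
qed

lemma Apery_Sab:
  assumes "b > 0" and "m \<ge> 2" and "coprime (rep b m) a"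
  shows "Apery (Sab a b m) = {greedy_len b m n * rep b m + a * n | n. n < rep b m}"
proof -
  have Apery: "w \<in> Apery (Sab a b m) \<longleftrightarrow>
      w \<in> Sab_greedy a b m \<and> (\<nexists>x. x \<in> Sab_greedy a b m \<and> w = x + rep b m)" for w
    unfolding mem_Apery_iff multiplicity_ns_Sab[OF assms(1,2)]
    unfolding Sab_eq_Sab_greedy[OF assms(1,2)] ..
  show ?thesis
  proof (intro set_eqI iffI)
    fix w assume "w \<in> Apery (Sab a b m)"
    then have "w \<in> Sab_greedy a b m" and "\<nexists>x. x \<in> Sab_greedy a b m \<and> w = x + rep b m"
      by (simp_all add: Apery)
    from Sab_greedy_minimal_form[OF assms(1,2) this]
    show "w \<in> {greedy_len b m n * rep b m + a * n | n. n < rep b m}" by blast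
  next
    fix w assume "w \<in> {greedy_len b m n * rep b m + a * n | n. n < rep b m}"
    then obtain n where n: "n < rep b m" and w: "w = greedy_len b m n * rep b m + a * n"
      by blast
    have "w \<noteq> x + rep b m" if x: "x \<in> Sab_greedy a b m" for x
    proof
      assume "w = x + rep b m"
      moreover obtain L N where "x = L * rep b m + a * N" and "greedy_len b m N \<le> L"
        using x by (auto simp: Sab_greedy_def)
      ultimately have "(L + 1) * rep b m + a * N = greedy_len b m n * rep b m + a * n"
        "greedy_len b m N \<le> L + 1"
        by (simp_all add: w algebra_simps)
      with \<open>greedy_len b m N \<le> L\<close> show False
        using greedy_form_unique[OF assms n] by fastforce
    qed
    moreover have "w \<in> Sab_greedy a b m" unfolding w Sab_greedy_def by blast
    ultimately show "w \<in> Apery (Sab a b m)" by (simp add: Apery)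
  qed
qed

lemma len_S_greedy_form:
  assumes "b > 0" and "m \<ge> 2" and "coprime (rep b m) a" and "n < rep b m"
  shows "len_S a b m (greedy_len b m n * rep b m + a * n) = greedy_len b m n"
  unfolding len_S_def
proof (rule the_equality)
  obtain u where "greedy_len b m n * rep b m + a * n = (\<Sum>j=1..m. u j * gen a b m j)"
    and "(\<Sum>j=1..m. u j) = greedy_len b m n"
    using Sab_greedy_sum_gen[OF assms(2) order_refl] .
  then show "\<exists>u. greedy_len b m n * rep b m + a * n = (\<Sum>j=1..m. u j * gen a b m j)
      \<and> greedy_len b m n = (\<Sum>j=1..m. u j)"
    by metis
next
  fix l
  assume "\<exists>u. greedy_len b m n * rep b m + a * n = (\<Sum>j=1..m. u j * gen a b m j)
      \<and> l = (\<Sum>j=1..m. u j)"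
  then obtain u where u: "greedy_len b m n * rep b m + a * n = (\<Sum>j=1..m. u j * gen a b m j)"
    and l: "l = (\<Sum>j=1..m. u j)" by blast
  define N where "N = (\<Sum>t<m. u (Suc t) * rep b t)"
  have "greedy_len b m N \<le> l"
    using greedy_len_le_sum[OF assms(1), of m "\<lambda>t. u (Suc t)"]
    by (simp add: N_def l sum.atLeast1_atMost_eq)
  moreover have "l * rep b m + a * N = greedy_len b m n * rep b m + a * n"
    unfolding u sum_gen_eq l N_def by (rule refl)
  ultimately show "l = greedy_len b m n"
    using greedy_form_unique[OF assms] by blast
qed

lemma bex_Apery_Sab_iff:
  assumes "b > 0" and "m \<ge> 2" and "coprime (rep b m) a"
  shows "(\<exists>w \<in> Apery (Sab a b m). P w (len_S a b m w)) \<longleftrightarrow>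
    (\<exists>n < rep b m. P (greedy_len b m n * rep b m + a * n) (greedy_len b m n))"
  unfolding Apery_Sab[OF assms] using len_S_greedy_form[OF assms] by auto

lemma Apery_Sab_Suc_iff:
  assumes "b > 0" and "k \<ge> 2" and "coprime (rep b (Suc k)) a"
  shows "w \<in> Apery (Sab a b (Suc k)) \<longleftrightarrow> w = b * gen a b (Suc k) (Suc k) \<or>
    (\<exists>u \<in> {0..b - 1}. \<exists>n < rep b k.
      w = (u + greedy_len b k n) * rep b (Suc k) + a * (u * rep b k + n))"
    (is "_ \<longleftrightarrow> ?rhs")
proof -
  let ?f = "\<lambda>n. greedy_len b (Suc k) n * rep b (Suc k) + a * n"
  have "0 < rep b k" using assms(2) by simp
  have top: "?f (b * rep b k) = b * gen a b (Suc k) (Suc k)"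
    using greedy_len_Suc_mult_add[OF \<open>0 < rep b k\<close>, of b] by (simp add: gen_def algebra_simps)
  have low: "?f (u * rep b k + n) = (u + greedy_len b k n) * rep b (Suc k) + a * (u * rep b k + n)"
    if "n < rep b k" for u n
    using greedy_len_Suc_mult_add[OF that] by simp
  have "w \<in> Apery (Sab a b (Suc k)) \<longleftrightarrow> (\<exists>n. n < rep b (Suc k) \<and> w = ?f n)"
    using Apery_Sab[OF assms(1) _ assms(3)] assms(2) by auto
  also have "\<dots> \<longleftrightarrow> w = ?f (b * rep b k) \<or>
      (\<exists>u \<in> {0..b - 1}. \<exists>n < rep b k. w = ?f (u * rep b k + n))"
    unfolding less_rep_Suc_iff[OF assms(1) \<open>0 < rep b k\<close>[simplified]] by blast
  also have "\<dots> \<longleftrightarrow> ?rhs"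
    unfolding top by (simp add: low cong: conj_cong)
  finally show ?thesis .
qed

theorem corollary19:
  fixes a b i :: nat
  assumes "a > 0" and "b > 1" and "i \<ge> 3"
    and "gcd (rep b i) a = 1" and "gcd (rep b (i - 1)) a = 1"
  shows "w \<in> Apery (Sab a b i) \<longleftrightarrow>
    (w = b * gen a b i i \<or>
     (\<exists>w' \<in> Apery (Sab a b (i - 1)). \<exists>u \<in> {0..b - 1}.
        w = w' + b ^ (i - 1) * len_S a b (i - 1) w' + u * gen a b i i))"
proof -
  obtain k where i: "i = Suc k" and k: "k \<ge> 2" using assms(3) by (cases i) auto
  have "b > 0" using assms(2) by simp
  have coprime: "coprime (rep b (Suc k)) a" "coprime (rep b k) a"
    using assms(4,5) by (simp_all add: i coprime_iff_gcd_eq_1)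
  have shift: "greedy_len b k n * rep b k + a * n + b ^ k * greedy_len b k n
      + u * gen a b (Suc k) (Suc k)
    = (u + greedy_len b k n) * rep b (Suc k) + a * (u * rep b k + n)" for n u
    by (simp add: gen_def rep_Suc algebra_simps)
  show ?thesis
    unfolding i diff_Suc_1 Apery_Sab_Suc_iff[OF \<open>b > 0\<close> k coprime(1)]
      bex_Apery_Sab_iff[OF \<open>b > 0\<close> k coprime(2),
        where P = "\<lambda>w' l. \<exists>u \<in> {0..b - 1}. w = w' + b ^ k * l + u * gen a b (Suc k) (Suc k)"]
    by (auto simp only: shift)
qed

end
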